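(* Let $\Phi,\Psi,S,T$ be finite sets and let $p(\varphi)$ on $\Phi$ and $p(\psi)$ on $\Psi$ be fixed probability distributions with full support. Let $\pi:S\times T\times\Phi\to\mathbb{R}$ be a payoff function that depends only on the signals and on the first player's state of nature. Suppose $p(s,t,\varphi,\psi)$ is a state-consistent entangled joint distribution on $S\times T\times\Phi\times\Psi$ that maximizes the expected payoff $\sum_{s,t,\varphi,\psi}\pi(s,t;\varphi)\,p(s,t,\varphi,\psi)$ among all state-consistent entangled joint distributions. Then there exists a state-consistent classically generated joint distribution $\widetilde p(s,t,\varphi,\psi)$ whose expected payoff $\sum_{s,t,\varphi,\psi}\pi(s,t;\varphi)\,\widetilde p(s,t,\varphi,\psi)$ equals this maximal value. That is, the maximal expected payoff achievable with state-consistent entangled signals coincides with the expected payoff of certain state-consistent classically generated signals.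
   Context: Coordination game: player A privately observes a state of nature $\varphi\in\Phi$, player B privately observes $\psi\in\Psi$; $\varphi$ and $\psi$ are independent with joint distribution $p(\varphi,\psi)=p(\varphi)p(\psi)$. Players receive signals $s\in S$ (A) and $t\in T$ (B) and play their signals as actions; the payoff is $\pi(s,t;\varphi)$ and the expected payoff of a joint distribution $q(s,t,\varphi,\psi)$ is $\sum\pi(s,t;\varphi)q(s,t,\varphi,\psi)$. A joint distribution of $(s,t,\varphi,\psi)$ is: state-consistent if its $(\varphi,\psi)$-marginal equals $p(\varphi)p(\psi)$; disjoint if $\Pr\{\psi\mid\varphi,s\}=\Pr\{\psi\mid\varphi\}$ and $\Pr\{\varphi\mid\psi,t\}=\Pr\{\varphi\mid\psi\}$ (whenever the conditioning events have positive probability); classically generated if there exists a random variable $x$ (jointly distributed with $(s,t,\varphi,\psi)$) independent of $(\varphi,\psi)$ such that $p(s,t\mid x,\varphi,\psi)=p(s\mid x,\varphi)\,p(t\mid x,\psi)$; entangled if it is disjoint and not classically generated. *)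

theory Defs
  imports Complex_Main
begin

definition prob_dist :: "('a::finite \<Rightarrow> real) \<Rightarrow> bool" where
  "prob_dist p \<longleftrightarrow> (\<forall>a. 0 \<le> p a) \<and> (\<Sum>a\<in>UNIV. p a) = 1"

definition joint_dist ::
  "('s::finite \<Rightarrow> 't::finite \<Rightarrow> 'phi::finite \<Rightarrow> 'psi::finite \<Rightarrow> real) \<Rightarrow> bool" where
  "joint_dist q \<longleftrightarrow> (\<forall>s t f g. 0 \<le> q s t f g) \<and>
     (\<Sum>s\<in>UNIV. \<Sum>t\<in>UNIV. \<Sum>f\<in>UNIV. \<Sum>g\<in>UNIV. q s t f g) = 1"

definition state_consistent ::
  "('phi::finite \<Rightarrow> real) \<Rightarrow> ('psi::finite \<Rightarrow> real) \<Rightarrow>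
   ('s::finite \<Rightarrow> 't::finite \<Rightarrow> 'phi \<Rightarrow> 'psi \<Rightarrow> real) \<Rightarrow> bool" where
  "state_consistent pA pB q \<longleftrightarrow>
     (\<forall>f g. (\<Sum>s\<in>UNIV. \<Sum>t\<in>UNIV. q s t f g) = pA f * pB g)"

definition marg_phi_psi where "marg_phi_psi q f g = (\<Sum>s\<in>UNIV. \<Sum>t\<in>UNIV. q s t f g)"
definition marg_phi where "marg_phi q f = (\<Sum>s\<in>UNIV. \<Sum>t\<in>UNIV. \<Sum>g\<in>UNIV. q s t f g)"
definition marg_psi where "marg_psi q g = (\<Sum>s\<in>UNIV. \<Sum>t\<in>UNIV. \<Sum>f\<in>UNIV. q s t f g)"
definition marg_s_phi where "marg_s_phi q s f = (\<Sum>t\<in>UNIV. \<Sum>g\<in>UNIV. q s t f g)"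
definition marg_t_psi where "marg_t_psi q t g = (\<Sum>s\<in>UNIV. \<Sum>f\<in>UNIV. q s t f g)"
definition marg_s_phi_psi where "marg_s_phi_psi q s f g = (\<Sum>t\<in>UNIV. q s t f g)"
definition marg_t_phi_psi where "marg_t_phi_psi q t f g = (\<Sum>s\<in>UNIV. q s t f g)"

text \<open>Disjoint: Pr{psi | phi, s} = Pr{psi | phi} and Pr{phi | psi, t} = Pr{phi | psi},
  whenever the conditioning events have positive probability.\<close>
definition disjoint_dist ::
  "('s::finite \<Rightarrow> 't::finite \<Rightarrow> 'phi::finite \<Rightarrow> 'psi::finite \<Rightarrow> real) \<Rightarrow> bool" where
  "disjoint_dist q \<longleftrightarrow>
     (\<forall>s f g. marg_s_phi q s f > 0 \<longrightarrow>
        marg_s_phi_psi q s f g / marg_s_phi q s f = marg_phi_psi q f g / marg_phi q f) \<and>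
     (\<forall>t f g. marg_t_psi q t g > 0 \<longrightarrow>
        marg_t_phi_psi q t f g / marg_t_psi q t g = marg_phi_psi q f g / marg_psi q g)"

text \<open>Classically generated: there is a (finitely valued) random variable x, given by a joint
  pmf r of (x,s,t,phi,psi) supported on x < n whose x-marginal is q, such that x is independent of
  (phi,psi) and p(s,t | x,phi,psi) = p(s | x,phi) p(t | x,psi).\<close>
definition classically_generated ::
  "('s::finite \<Rightarrow> 't::finite \<Rightarrow> 'phi::finite \<Rightarrow> 'psi::finite \<Rightarrow> real) \<Rightarrow> bool" where
  "classically_generated q \<longleftrightarrow>
     (\<exists>(n::nat) (r :: nat \<Rightarrow> 's \<Rightarrow> 't \<Rightarrow> 'phi \<Rightarrow> 'psi \<Rightarrow> real).
        (\<forall>x s t f g. 0 \<le> r x s t f g) \<and>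
        (\<forall>x s t f g. n \<le> x \<longrightarrow> r x s t f g = 0) \<and>
        (\<forall>s t f g. q s t f g = (\<Sum>x<n. r x s t f g)) \<and>
        (\<comment> \<open>x independent of (phi,psi)\<close>
         \<forall>x f g. marg_phi_psi (r x) f g =
                 (\<Sum>s\<in>UNIV. \<Sum>t\<in>UNIV. \<Sum>f'\<in>UNIV. \<Sum>g'\<in>UNIV. r x s t f' g') * marg_phi_psi q f g) \<and>
        (\<comment> \<open>conditional factorisation, whenever p(x,phi,psi) > 0\<close>
         \<forall>x s t f g. marg_phi_psi (r x) f g > 0 \<longrightarrow>
           r x s t f g / marg_phi_psi (r x) f g =
             (marg_s_phi (r x) s f / marg_phi (r x) f) * (marg_t_psi (r x) t g / marg_psi (r x) g)))"

definition entangled ::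
  "('s::finite \<Rightarrow> 't::finite \<Rightarrow> 'phi::finite \<Rightarrow> 'psi::finite \<Rightarrow> real) \<Rightarrow> bool" where
  "entangled q \<longleftrightarrow> disjoint_dist q \<and> \<not> classically_generated q"

definition expected_payoff ::
  "('s::finite \<Rightarrow> 't::finite \<Rightarrow> 'phi::finite \<Rightarrow> real) \<Rightarrow>
   ('s \<Rightarrow> 't \<Rightarrow> 'phi \<Rightarrow> 'psi::finite \<Rightarrow> real) \<Rightarrow> real" where
  "expected_payoff pay q =
     (\<Sum>s\<in>UNIV. \<Sum>t\<in>UNIV. \<Sum>f\<in>UNIV. \<Sum>g\<in>UNIV. pay s t f * q s t f g)"

end

theory Submission
  imports Defs
begin

text \<open>The payoff does not depend on \<open>\<psi>\<close>, so replacing \<open>\<psi>\<close> by an independent fresh draw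
  from \<open>p(\<psi>)\<close>, i.e. passing from \<open>p(s,t,\<phi>,\<psi>)\<close> to \<open>p(s,t,\<phi>) p(\<psi>)\<close>, changes neither the
  expected payoff nor state consistency. Disjointness of \<open>p\<close> makes B's signal \<open>t\<close> independent
  of \<open>\<phi>\<close>. In the new distribution \<open>t\<close> is therefore independent of \<open>(\<phi>,\<psi>)\<close>, and \<open>s\<close> depends
  on \<open>(t,\<phi>)\<close> only, so \<open>t\<close> itself serves as the classical hidden variable \<open>x\<close>.\<close>

definition marg_t ::
  "('s::finite \<Rightarrow> 't::finite \<Rightarrow> 'phi::finite \<Rightarrow> 'psi::finite \<Rightarrow> real) \<Rightarrow> 't \<Rightarrow> real" where
  "marg_t q t = (\<Sum>s\<in>UNIV. \<Sum>f\<in>UNIV. \<Sum>g\<in>UNIV. q s t f g)"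

definition marg_t_phi ::
  "('s::finite \<Rightarrow> 't::finite \<Rightarrow> 'phi::finite \<Rightarrow> 'psi::finite \<Rightarrow> real) \<Rightarrow> 't \<Rightarrow> 'phi \<Rightarrow> real" where
  "marg_t_phi q t f = (\<Sum>s\<in>UNIV. \<Sum>g\<in>UNIV. q s t f g)"

definition marg_s_t_phi ::
  "('s::finite \<Rightarrow> 't::finite \<Rightarrow> 'phi::finite \<Rightarrow> 'psi::finite \<Rightarrow> real) \<Rightarrow> 's \<Rightarrow> 't \<Rightarrow> 'phi \<Rightarrow> real"
  where
  "marg_s_t_phi q s t f = (\<Sum>g\<in>UNIV. q s t f g)"

lemma marg_t_eq_sum_marg_t_psi: "marg_t q t = (\<Sum>g\<in>UNIV. marg_t_psi q t g)"
  unfolding marg_t_def marg_t_psi_def by (subst sum.swap, subst sum.swap) (rule refl)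

lemma marg_t_phi_eq_sum_marg_t_phi_psi: "marg_t_phi q t f = (\<Sum>g\<in>UNIV. marg_t_phi_psi q t f g)"
  unfolding marg_t_phi_def marg_t_phi_psi_def by (rule sum.swap)

lemma marg_psi_eq_sum_marg_phi_psi: "marg_psi q g = (\<Sum>f\<in>UNIV. marg_phi_psi q f g)"
  unfolding marg_psi_def marg_phi_psi_def by (subst sum.swap, subst sum.swap) (rule refl)

lemma marg_phi_eq_sum_marg_phi_psi: "marg_phi q f = (\<Sum>g\<in>UNIV. marg_phi_psi q f g)"
  unfolding marg_phi_def marg_phi_psi_def by (subst sum.swap, subst sum.swap) (rule refl)

lemma marg_t_phi_eq_sum_marg_s_t_phi: "marg_t_phi q t f = (\<Sum>s\<in>UNIV. marg_s_t_phi q s t f)"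
  unfolding marg_t_phi_def marg_s_t_phi_def ..

lemma marg_t_eq_sum_marg_s_t_phi: "marg_t q t = (\<Sum>s\<in>UNIV. \<Sum>f\<in>UNIV. marg_s_t_phi q s t f)"
  unfolding marg_t_def marg_s_t_phi_def ..

lemma marg_t_phi_psi_le_marg_t_psi:
  fixes q :: "'s::finite \<Rightarrow> 't::finite \<Rightarrow> 'phi::finite \<Rightarrow> 'psi::finite \<Rightarrow> real"
  assumes "\<forall>s t f g. 0 \<le> q s t f g"
  shows "marg_t_phi_psi q t f g \<le> marg_t_psi q t g"
  unfolding marg_t_phi_psi_def marg_t_psi_def
  by (intro sum_mono member_le_sum) (use assms in auto)

lemma marg_phi_psi_of_state_consistent:
  "state_consistent pA pB q \<Longrightarrow> marg_phi_psi q f g = pA f * pB g"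
  by (simp add: state_consistent_def marg_phi_psi_def)

lemma marg_psi_of_state_consistent:
  "prob_dist pA \<Longrightarrow> state_consistent pA pB q \<Longrightarrow> marg_psi q g = pB g"
  by (simp add: marg_psi_eq_sum_marg_phi_psi marg_phi_psi_of_state_consistent prob_dist_def
      sum_distrib_right[symmetric])

lemma marg_phi_of_state_consistent:
  "prob_dist pB \<Longrightarrow> state_consistent pA pB q \<Longrightarrow> marg_phi q f = pA f"
  by (simp add: marg_phi_eq_sum_marg_phi_psi marg_phi_psi_of_state_consistent prob_dist_def
      sum_distrib_left[symmetric])

lemma marg_t_phi_psi_of_disjoint:
  assumes "prob_dist pA" and "pB g > 0" and nonneg: "\<forall>s t f g. 0 \<le> q s t f g"
    and "state_consistent pA pB q" and "disjoint_dist q"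
  shows "marg_t_phi_psi q t f g = pA f * marg_t_psi q t g"
proof (cases "marg_t_psi q t g > 0")
  case True
  then have "marg_t_phi_psi q t f g / marg_t_psi q t g = marg_phi_psi q f g / marg_psi q g"
    using \<open>disjoint_dist q\<close> by (simp add: disjoint_dist_def)
  also have "\<dots> = pA f"
    using assms by (simp add: marg_phi_psi_of_state_consistent marg_psi_of_state_consistent)
  finally show ?thesis using True by (simp add: divide_eq_eq)
next
  case False
  have "0 \<le> marg_t_phi_psi q t f g"
    using nonneg by (simp add: marg_t_phi_psi_def sum_nonneg)
  moreover have "marg_t_phi_psi q t f g \<le> marg_t_psi q t g"
    using nonneg by (rule marg_t_phi_psi_le_marg_t_psi)
  ultimately have "marg_t_psi q t g = 0" and "marg_t_phi_psi q t f g = 0"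
    using False by linarith+
  then show ?thesis by simp
qed

lemma marg_t_phi_of_disjoint:
  assumes "prob_dist pA" and "\<forall>g. pB g > 0" and "\<forall>s t f g. 0 \<le> q s t f g"
    and "state_consistent pA pB q" and "disjoint_dist q"
  shows "marg_t_phi q t f = pA f * marg_t q t"
proof -
  have "marg_t_phi_psi q t f g = pA f * marg_t_psi q t g" for g
    using assms by (intro marg_t_phi_psi_of_disjoint) auto
  then show ?thesis
    by (simp add: marg_t_phi_eq_sum_marg_t_phi_psi marg_t_eq_sum_marg_t_psi sum_distrib_left)
qed

definition restrict_t ::
  "('s::finite \<Rightarrow> 't::finite \<Rightarrow> 'phi::finite \<Rightarrow> 'psi::finite \<Rightarrow> real) \<Rightarrow> 't \<Rightarrow>
   ('s \<Rightarrow> 't \<Rightarrow> 'phi \<Rightarrow> 'psi \<Rightarrow> real)" where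
  "restrict_t q t0 s t f g = of_bool (t = t0) * q s t f g"

lemma total_restrict_t:
  "(\<Sum>s\<in>UNIV. \<Sum>t\<in>UNIV. \<Sum>f\<in>UNIV. \<Sum>g\<in>UNIV. restrict_t q t0 s t f g) = marg_t q t0"
  by (simp add: restrict_t_def marg_t_def sum_distrib_left[symmetric])

lemma marg_phi_psi_restrict_t: "marg_phi_psi (restrict_t q t0) f g = marg_t_phi_psi q t0 f g"
  by (simp add: restrict_t_def marg_phi_psi_def marg_t_phi_psi_def sum_distrib_left[symmetric])

lemma marg_s_phi_restrict_t: "marg_s_phi (restrict_t q t0) s f = marg_s_t_phi q s t0 f"
  by (simp add: restrict_t_def marg_s_phi_def marg_s_t_phi_def sum_distrib_left[symmetric])

lemma marg_phi_restrict_t: "marg_phi (restrict_t q t0) f = marg_t_phi q t0 f"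
  by (simp add: restrict_t_def marg_phi_def marg_t_phi_def sum_distrib_left[symmetric])

lemma marg_t_psi_restrict_t:
  "marg_t_psi (restrict_t q t0) t g = of_bool (t = t0) * marg_t_psi q t0 g"
  by (simp add: restrict_t_def marg_t_psi_def sum_distrib_left[symmetric])

lemma marg_psi_restrict_t: "marg_psi (restrict_t q t0) g = marg_t_psi q t0 g"
  by (simp add: restrict_t_def marg_psi_def marg_t_psi_def sum_distrib_left[symmetric])

lemma restrict_t_factorizes:
  assumes nonneg: "\<forall>s t f g. 0 \<le> q s t f g"
    and s_indep_psi: "q s t0 f g * marg_t_phi q t0 f = marg_s_t_phi q s t0 f * marg_t_phi_psi q t0 f g"
    and pos: "marg_phi_psi (restrict_t q t0) f g > 0"
  shows "restrict_t q t0 s t f g / marg_phi_psi (restrict_t q t0) f g =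
    (marg_s_phi (restrict_t q t0) s f / marg_phi (restrict_t q t0) f) *
    (marg_t_psi (restrict_t q t0) t g / marg_psi (restrict_t q t0) g)"
proof -
  have pos': "marg_t_phi_psi q t0 f g > 0"
    using pos by (simp add: marg_phi_psi_restrict_t)
  have "marg_t_phi_psi q t0 f g \<le> marg_t_phi q t0 f"
    unfolding marg_t_phi_eq_sum_marg_t_phi_psi
    using nonneg by (intro member_le_sum) (auto simp: marg_t_phi_psi_def sum_nonneg)
  moreover have "marg_t_phi_psi q t0 f g \<le> marg_t_psi q t0 g"
    using nonneg by (rule marg_t_phi_psi_le_marg_t_psi)
  ultimately have "marg_t_phi q t0 f \<noteq> 0" "marg_t_psi q t0 g \<noteq> 0"
    using pos' by linarith+
  with pos' s_indep_psi show ?thesis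
    by (simp add: restrict_t_def marg_phi_psi_restrict_t marg_s_phi_restrict_t
        marg_phi_restrict_t marg_t_psi_restrict_t marg_psi_restrict_t field_simps)
qed

text \<open>The hypothesis \<open>s_indep_psi\<close> is the division-free form of
  \<open>p(s | t,\<phi>,\<psi>) = p(s | t,\<phi>)\<close>.\<close>

lemma classically_generated_by_signal_t:
  fixes q :: "'s::finite \<Rightarrow> 't::finite \<Rightarrow> 'phi::finite \<Rightarrow> 'psi::finite \<Rightarrow> real"
  assumes nonneg: "\<forall>s t f g. 0 \<le> q s t f g"
    and t_indep_states: "\<And>t f g. marg_t_phi_psi q t f g = marg_t q t * marg_phi_psi q f g"
    and s_indep_psi:
      "\<And>s t f g. q s t f g * marg_t_phi q t f = marg_s_t_phi q s t f * marg_t_phi_psi q t f g"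
  shows "classically_generated q"
proof -
  obtain e :: "'t \<Rightarrow> nat" and n where range_e: "range e = {i. i < n}" and "inj e"
    using finite_imp_inj_to_nat_seg[of "UNIV :: 't set"] by auto
  define r where "r x s t f g = of_bool (x = e t) * q s t f g" for x s t f g
  have e_less: "e t < n" for t
    using range_e by auto
  have r_e: "r (e t0) = restrict_t q t0" for t0
    using \<open>inj e\<close> by (auto simp: r_def restrict_t_def fun_eq_iff inj_eq)
  have r_zero: "r x = (\<lambda>_ _ _ _. 0)" if "x \<notin> range e" for x
    using that by (auto simp: r_def fun_eq_iff)
  show ?thesis
    unfolding classically_generated_def
  proof (intro exI[of _ n] exI[of _ r] conjI allI impI)
    show "0 \<le> r x s t f g" for x s t f g
      using nonneg by (simp add: r_def)
    show "r x s t f g = 0" if "n \<le> x" for x s t f g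
      using that e_less[of t] by (auto simp: r_def)
    show "q s t f g = (\<Sum>x<n. r x s t f g)" for s t f g
      using e_less[of t] by (simp add: r_def)
    show "marg_phi_psi (r x) f g =
      (\<Sum>s\<in>UNIV. \<Sum>t\<in>UNIV. \<Sum>f'\<in>UNIV. \<Sum>g'\<in>UNIV. r x s t f' g') * marg_phi_psi q f g"
      for x f g
    proof (cases "x \<in> range e")
      case True
      then obtain t0 where "x = e t0" by blast
      then show ?thesis
        by (simp add: r_e marg_phi_psi_restrict_t total_restrict_t t_indep_states)
    qed (simp add: r_zero marg_phi_psi_def)
    show "r x s t f g / marg_phi_psi (r x) f g =
      (marg_s_phi (r x) s f / marg_phi (r x) f) * (marg_t_psi (r x) t g / marg_psi (r x) g)"
      if "marg_phi_psi (r x) f g > 0" for x s t f g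
    proof (cases "x \<in> range e")
      case True
      then obtain t0 where "x = e t0" by blast
      with that show ?thesis
        by (simp add: r_e restrict_t_factorizes nonneg s_indep_psi)
    qed (use that in \<open>simp add: r_zero marg_phi_psi_def\<close>)
  qed
qed

definition resample_psi ::
  "('psi::finite \<Rightarrow> real) \<Rightarrow> ('s::finite \<Rightarrow> 't::finite \<Rightarrow> 'phi::finite \<Rightarrow> 'psi \<Rightarrow> real) \<Rightarrow>
   ('s \<Rightarrow> 't \<Rightarrow> 'phi \<Rightarrow> 'psi \<Rightarrow> real)" where
  "resample_psi pB q s t f g = marg_s_t_phi q s t f * pB g"

lemma marg_s_t_phi_resample_psi:
  "prob_dist pB \<Longrightarrow> marg_s_t_phi (resample_psi pB q) s t f = marg_s_t_phi q s t f"
  by (simp add: resample_psi_def marg_s_t_phi_def prob_dist_def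
      sum_distrib_left[symmetric])

lemma marg_t_phi_psi_resample_psi:
  "marg_t_phi_psi (resample_psi pB q) t f g = marg_t_phi q t f * pB g"
  by (simp add: resample_psi_def marg_t_phi_psi_def marg_t_phi_eq_sum_marg_s_t_phi
      sum_distrib_right)

lemma joint_dist_resample_psi:
  assumes "prob_dist pB" and "joint_dist q"
  shows "joint_dist (resample_psi pB q)"
proof -
  have "(\<Sum>g\<in>UNIV. resample_psi pB q s t f g) = (\<Sum>g\<in>UNIV. q s t f g)" for s t f
    using marg_s_t_phi_resample_psi[OF \<open>prob_dist pB\<close>, of q s t f]
    by (simp add: marg_s_t_phi_def)
  then show ?thesis
    using assms
    by (simp add: joint_dist_def prob_dist_def resample_psi_def marg_s_t_phi_def sum_nonneg)
qed

lemma state_consistent_resample_psi: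
  assumes "prob_dist pB" and "state_consistent pA pB q"
  shows "state_consistent pA pB (resample_psi pB q)"
proof -
  have "(\<Sum>s\<in>UNIV. \<Sum>t\<in>UNIV. resample_psi pB q s t f g) = marg_phi q f * pB g" for f g
    by (simp add: resample_psi_def marg_s_t_phi_def marg_phi_def sum_distrib_right)
  then show ?thesis
    using assms by (simp add: state_consistent_def marg_phi_of_state_consistent)
qed

lemma expected_payoff_resample_psi:
  assumes "prob_dist pB"
  shows "expected_payoff pay (resample_psi pB q) = expected_payoff pay q"
proof -
  have "(\<Sum>g\<in>UNIV. pay s t f * resample_psi pB q s t f g) = (\<Sum>g\<in>UNIV. pay s t f * q s t f g)"
    for s t f
    using marg_s_t_phi_resample_psi[OF assms, of q s t f]
    by (simp add: marg_s_t_phi_def sum_distrib_left[symmetric])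
  then show ?thesis
    by (simp add: expected_payoff_def)
qed

lemma classically_generated_resample_psi:
  assumes "prob_dist pB" and nonneg: "\<forall>s t f g. 0 \<le> q s t f g"
    and "state_consistent pA pB q" and t_indep_phi: "\<And>t f. marg_t_phi q t f = pA f * marg_t q t"
  shows "classically_generated (resample_psi pB q)"
proof (rule classically_generated_by_signal_t)
  let ?q = "resample_psi pB q"
  have marg_t_phi: "marg_t_phi ?q = marg_t_phi q" and marg_t: "marg_t ?q = marg_t q"
    using \<open>prob_dist pB\<close>
    by (simp_all add: fun_eq_iff marg_t_phi_eq_sum_marg_s_t_phi marg_t_eq_sum_marg_s_t_phi
        marg_s_t_phi_resample_psi)
  show "\<forall>s t f g. 0 \<le> ?q s t f g"
    using nonneg \<open>prob_dist pB\<close>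
    by (simp add: resample_psi_def marg_s_t_phi_def prob_dist_def sum_nonneg)
  show "marg_t_phi_psi ?q t f g = marg_t ?q t * marg_phi_psi ?q f g" for t f g
    using state_consistent_resample_psi[OF assms(1,3)]
    by (simp add: marg_t marg_t_phi_psi_resample_psi t_indep_phi marg_phi_psi_of_state_consistent)
  show "?q s t f g * marg_t_phi ?q t f = marg_s_t_phi ?q s t f * marg_t_phi_psi ?q t f g"
    for s t f g
    using \<open>prob_dist pB\<close>
    by (simp add: marg_t_phi marg_t_phi_psi_resample_psi resample_psi_def
        marg_s_t_phi_resample_psi)
qed

theorem theorem2:
  fixes pA :: "'phi::finite \<Rightarrow> real" and pB :: "'psi::finite \<Rightarrow> real"
    and pay :: "'s::finite \<Rightarrow> 't::finite \<Rightarrow> 'phi \<Rightarrow> real"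
    and p :: "'s \<Rightarrow> 't \<Rightarrow> 'phi \<Rightarrow> 'psi \<Rightarrow> real"
  assumes "prob_dist pA" and "\<forall>f. pA f > 0"
    and "prob_dist pB" and "\<forall>g. pB g > 0"
    and "joint_dist p" and "state_consistent pA pB p" and "entangled p"
    and "\<forall>q. joint_dist q \<and> state_consistent pA pB q \<and> entangled q
              \<longrightarrow> expected_payoff pay q \<le> expected_payoff pay p"
  shows "\<exists>q. joint_dist q \<and> state_consistent pA pB q \<and> classically_generated q
              \<and> expected_payoff pay q = expected_payoff pay p"
proof (intro exI conjI)
  have nonneg: "\<forall>s t f g. 0 \<le> p s t f g"
    using \<open>joint_dist p\<close> by (simp add: joint_dist_def)
  have "marg_t_phi p t f = pA f * marg_t p t" for t f
    using assms(1,4,6,7) nonneg by (auto simp: entangled_def intro: marg_t_phi_of_disjoint)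
  then show "classically_generated (resample_psi pB p)"
    using assms(3,6) nonneg by (intro classically_generated_resample_psi)
  show "joint_dist (resample_psi pB p)"
    using assms(3,5) by (rule joint_dist_resample_psi)
  show "state_consistent pA pB (resample_psi pB p)"
    using assms(3,6) by (rule state_consistent_resample_psi)
  show "expected_payoff pay (resample_psi pB p) = expected_payoff pay p"
    using assms(3) by (rule expected_payoff_resample_psi)
qed

end
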